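(* Let $A$ and $B$ be $n\times n$ binary matrices (entries in $\mathbb{Z}_2$) with zero diagonal. The facets-pairing structures $\mathcal{F}_A$ and $\mathcal{F}_B$ on $\mathcal{C}^n$ are equivalent if and only if there is an $n\times n$ permutation matrix $P$ with $B=P^{-1}AP$.
   Context: $[\pm n]=\{\pm1,\dots,\pm n\}$, $\mathcal{C}^n=\{x\in\mathbb{R}^n: -\tfrac14\le x_i\le\tfrac14\}$; $\mathbf{F}(i)$, $\mathbf{F}(-i)$ ($1\le i\le n$) are the facets in $\{x_i=\tfrac14\}$, $\{x_i=-\tfrac14\}$. For a binary matrix $A$ write $A^i_k$ for its $(i,k)$ entry (viewed as $0$ or $1$). The facets-pairing structure $\mathcal{F}_A$ pairs $\mathbf{F}(j)$ with $\mathbf{F}(-j)$ via $\tau^A_j:\mathbf{F}(j)\to\mathbf{F}(-j)$, $\tau^A_j(x_1,\dots,x_n)=(y_1,\dots,y_n)$ with $y_{|j|}=-x_{|j|}$ and $y_k=(-1)^{A^{|j|}_k}x_k$ for $k\ne|j|$. Two facets-pairing structures given by pairings $\mathbf{F}(j)\mapsto\mathbf{F}(\omega(j))$ with maps $\tau_j$, and $\mathbf{F}(j)\mapsto\mathbf{F}(\omega'(j))$ with maps $\tau'_j$, are equivalent if there is a symmetry $h$ of $\mathcal{C}^n$ (Euclidean isometry preserving $\mathcal{C}^n$) such that $\tau_j=h^{-1}\circ\tau'_{j'}\circ h$ on $\mathbf{F}(j)$ for every $j\in[\pm n]$, where $\mathbf{F}(j')=h(\mathbf{F}(j))$. *)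

theory Defs
  imports "HOL-Analysis.Analysis" "HOL-Library.Z2"
begin

text \<open>Signed indices [+-n]: (i, True) stands for +i, (i, False) for -i.\<close>
type_synonym 'n sidx = "'n \<times> bool"

definition cube :: "(real^'n) set" where
  "cube = {x. \<forall>i. -(1/4) \<le> x$i \<and> x$i \<le> 1/4}"

definition facet :: "'n sidx \<Rightarrow> (real^'n) set" where
  "facet j = {x \<in> cube. x $ fst j = (if snd j then 1/4 else -(1/4))}"

definition cube_symmetry :: "(real^'n \<Rightarrow> real^'n) \<Rightarrow> bool" where
  "cube_symmetry h \<longleftrightarrow> (\<forall>x y. dist (h x) (h y) = dist x y) \<and> h ` cube = cube"

text \<open>Equivalence of two facets-pairing structures given by their facet maps tau, tau'
  (tau j maps facet j onto its paired facet).\<close>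
definition fps_equiv ::
  "('n sidx \<Rightarrow> real^'n \<Rightarrow> real^'n) \<Rightarrow> ('n sidx \<Rightarrow> real^'n \<Rightarrow> real^'n) \<Rightarrow> bool" where
  "fps_equiv \<tau> \<tau>' \<longleftrightarrow> (\<exists>h. cube_symmetry h \<and>
      (\<forall>j j'. facet j' = h ` facet j \<longrightarrow> (\<forall>x \<in> facet j. \<tau> j x = inv h (\<tau>' j' (h x)))))"

text \<open>The facet maps of F_A, for a binary matrix A (entries in Z_2 = bit).\<close>
definition tauA :: "bit^'n^'n \<Rightarrow> 'n sidx \<Rightarrow> real^'n \<Rightarrow> real^'n" where
  "tauA A j x = (\<chi> k. if k = fst j then - (x $ k)
                      else if A $ fst j $ k = 1 then - (x $ k) else x $ k)"

definition perm_matrix :: "bit^'n^'n \<Rightarrow> bool" where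
  "perm_matrix P \<longleftrightarrow> (\<forall>i. \<exists>!j. P $ i $ j = 1) \<and> (\<forall>j. \<exists>!i. P $ i $ j = 1)"

end

theory Submission
  imports Defs
begin

text \<open>
  The proof has three ingredients.
  (1) Conjugating a matrix by the permutation matrix of a bijection p just relabels its
      rows and columns by p (lemma perm_mat_conj), and the permutation matrices are
      exactly the matrices of bijections (lemma perm_matrix_iff).
  (2) The symmetries of the cube are exactly the signed coordinate permutations
      x \<mapsto> (\<epsilon>(\<sigma>\<inverse> k) x_(\<sigma>\<inverse> k))_k, with \<sigma> bijective and \<epsilon> a sign vector.
      A signed permutation is an orthogonal map fixing the cube, and it maps the
      facet at position i to a facet at position \<sigma> i.
      Conversely a symmetry maps antipodal vertices to antipodal vertices (they are
      exactly the pairs at maximal distance), hence fixes the centre and is orthogonal;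
      it sends each basis vector e_i to a vector with entries in {-1,0,1} and norm 1,
      i.e. to \<plusminus>e_k (lemma cube_symmetry_signed_perm).
  (3) A signed permutation conjugates the facet maps of A into those of the relabelled
      matrix (lemma signed_perm_tauA), and a facet map applied to a point with nonzero
      coordinates determines the off-diagonal part of the corresponding row of the matrix
      (lemma tauA_row_determined).  Since the diagonals vanish, this gives both
      directions of the theorem.
\<close>

subsection \<open>Permutation matrices\<close>

lemma matrix_inv_unique:
  fixes A :: "'a::semiring_1^'n^'n"
  assumes AB: "A ** B = mat 1" and BA: "B ** A = mat 1"
  shows "matrix_inv A = B"
proof -
  let ?C = "matrix_inv A"
  have "A ** ?C = mat 1 \<and> ?C ** A = mat 1"
    unfolding matrix_inv_def by (rule someI[of _ B]) (use AB BA in blast)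
  then have CA: "?C ** A = mat 1" by blast
  have "?C = ?C ** (A ** B)" by (simp add: AB)
  also have "\<dots> = B" by (simp add: matrix_mul_assoc CA)
  finally show ?thesis .
qed

definition perm_mat :: "('n::finite \<Rightarrow> 'n) \<Rightarrow> 'a::semiring_1^'n^'n" where
  "perm_mat p = (\<chi> k l. of_bool (l = p k))"

definition relabel :: "('n \<Rightarrow> 'n) \<Rightarrow> 'a^'n^'n \<Rightarrow> 'a^'n^'n" where
  "relabel p A = (\<chi> a b. A $ inv p a $ inv p b)"

lemma relabel_at: "bij p \<Longrightarrow> relabel p A $ p i $ p k = A $ i $ k"
  by (simp add: relabel_def bij_is_inj)

lemma perm_mat_mult_left: "(perm_mat p ** A) $ k = A $ p k"
  by (simp add: perm_mat_def matrix_matrix_mult_def vec_eq_iff)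

lemma perm_mat_mult_right:
  assumes "bij p" shows "(A ** perm_mat p) $ k $ l = A $ k $ inv p l"
proof -
  have "{j. l = p j} = {inv p l}" using assms by (auto simp: bij_inv_eq_iff bij_is_surj surj_f_inv_f)
  then show ?thesis by (simp add: perm_mat_def matrix_matrix_mult_def)
qed

lemma perm_mat_inv:
  assumes "bij p" shows "matrix_inv (perm_mat p :: 'a::semiring_1^'n::finite^'n) = perm_mat (inv p)"
proof (rule matrix_inv_unique)
  show "perm_mat p ** perm_mat (inv p) = (mat 1 :: 'a^'n^'n)"
    unfolding vec_eq_iff perm_mat_mult_left using assms by (simp add: perm_mat_def mat_def bij_is_inj)
  show "perm_mat (inv p) ** perm_mat p = (mat 1 :: 'a^'n^'n)"
    unfolding vec_eq_iff perm_mat_mult_left using assms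
    by (simp add: perm_mat_def mat_def bij_is_surj surj_f_inv_f)
qed

lemma perm_mat_conj:
  fixes A :: "'a::semiring_1^'n::finite^'n"
  assumes "bij p" shows "matrix_inv (perm_mat p) ** A ** perm_mat p = relabel p A"
  using assms by (simp add: vec_eq_iff perm_mat_inv perm_mat_mult_left perm_mat_mult_right relabel_def)

lemma perm_matrix_iff: "perm_matrix P \<longleftrightarrow> (\<exists>p. bij p \<and> P = perm_mat p)"
proof
  assume P: "perm_matrix P"
  define p where "p k = (THE l. P $ k $ l = 1)" for k
  have entry: "P $ k $ l = 1 \<longleftrightarrow> l = p k" for k l
    using P unfolding perm_matrix_def p_def by (metis (mono_tags, lifting) the1_equality)
  have "inj p"
    using P entry unfolding perm_matrix_def inj_def by metis
  then have "bij p" by (simp add: bij_def finite_UNIV_inj_surj)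
  moreover have "P = perm_mat p"
    using entry by (simp add: perm_mat_def vec_eq_iff) (metis bit_not_one_iff)
  ultimately show "\<exists>p. bij p \<and> P = perm_mat p" by blast
next
  assume "\<exists>p. bij p \<and> P = perm_mat p"
  then show "perm_matrix P"
    unfolding perm_matrix_def perm_mat_def by (auto simp: bij_iff) metis+
qed

subsection \<open>Signed permutations of coordinates\<close>

definition signs :: "('n \<Rightarrow> real) \<Rightarrow> bool" where
  "signs \<epsilon> \<longleftrightarrow> (\<forall>i. \<bar>\<epsilon> i\<bar> = 1)"

lemma signs_cases: "signs \<epsilon> \<Longrightarrow> \<epsilon> i = 1 \<or> \<epsilon> i = -1"
  unfolding signs_def by (metis abs_if minus_minus)

lemma signs_square: "signs \<epsilon> \<Longrightarrow> \<epsilon> i * \<epsilon> i = 1"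
  using signs_cases[of \<epsilon> i] by auto

definition signed_perm :: "('n::finite \<Rightarrow> 'n) \<Rightarrow> ('n \<Rightarrow> real) \<Rightarrow> real^'n \<Rightarrow> real^'n" where
  "signed_perm \<sigma> \<epsilon> x = (\<chi> k. \<epsilon> (inv \<sigma> k) * x $ inv \<sigma> k)"

lemma signed_perm_at: "bij \<sigma> \<Longrightarrow> signed_perm \<sigma> \<epsilon> x $ \<sigma> j = \<epsilon> j * x $ j"
  by (simp add: signed_perm_def bij_is_inj)

lemma all_bij_reindex: "bij \<sigma> \<Longrightarrow> (\<forall>k. P k) \<longleftrightarrow> (\<forall>j. P (\<sigma> j))"
  by (metis bij_is_surj surj_f_inv_f)

lemma vec_eq_bij_iff: "bij \<sigma> \<Longrightarrow> x = y \<longleftrightarrow> (\<forall>j. x $ \<sigma> j = y $ \<sigma> j)"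
  by (simp add: vec_eq_iff all_bij_reindex[of \<sigma>])

lemma signed_perm_eq_iff:
  assumes "bij \<sigma>" "signs \<epsilon>"
  shows "signed_perm \<sigma> \<epsilon> x = y \<longleftrightarrow> x = (\<chi> j. \<epsilon> j * y $ \<sigma> j)"
proof -
  have swap: "\<epsilon> j * a = b \<longleftrightarrow> a = \<epsilon> j * b" for j a b
    using signs_square[OF assms(2), of j] by (metis mult.assoc mult_1)
  have "signed_perm \<sigma> \<epsilon> x = y \<longleftrightarrow> (\<forall>j. \<epsilon> j * x $ j = y $ \<sigma> j)"
    by (simp add: vec_eq_bij_iff[OF assms(1)] signed_perm_at[OF assms(1)])
  then show ?thesis by (simp add: swap vec_eq_iff)
qed

lemma signed_perm_bij: "bij \<sigma> \<Longrightarrow> signs \<epsilon> \<Longrightarrow> bij (signed_perm \<sigma> \<epsilon>)"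
  by (simp add: bij_iff signed_perm_eq_iff)

lemma signed_perm_image:
  assumes "bij \<sigma>" "signs \<epsilon>"
  shows "y \<in> signed_perm \<sigma> \<epsilon> ` S \<longleftrightarrow> (\<chi> j. \<epsilon> j * y $ \<sigma> j) \<in> S"
proof -
  have "y \<in> signed_perm \<sigma> \<epsilon> ` S \<longleftrightarrow> (\<exists>x\<in>S. signed_perm \<sigma> \<epsilon> x = y)" by blast
  then show ?thesis by (simp add: signed_perm_eq_iff[OF assms])
qed

lemma cube_iff: "x \<in> cube \<longleftrightarrow> (\<forall>i. \<bar>x $ i\<bar> \<le> 1/4)"
proof -
  have "(-(1/4) \<le> a \<and> a \<le> 1/4) \<longleftrightarrow> \<bar>a\<bar> \<le> 1/4" for a :: real by arith
  then show ?thesis unfolding cube_def by simp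
qed

lemma signed_perm_cube:
  assumes "bij \<sigma>" "signs \<epsilon>"
  shows "signed_perm \<sigma> \<epsilon> ` cube = cube"
proof -
  have "y \<in> signed_perm \<sigma> \<epsilon> ` cube \<longleftrightarrow> (\<forall>j. \<bar>y $ \<sigma> j\<bar> \<le> 1/4)" for y
    using assms(2) unfolding signed_perm_image[OF assms] cube_iff signs_def by (simp add: abs_mult)
  moreover have "(\<forall>j. \<bar>y $ \<sigma> j\<bar> \<le> 1/4) \<longleftrightarrow> y \<in> cube" for y
    unfolding cube_iff by (rule all_bij_reindex[OF assms(1), symmetric])
  ultimately have "y \<in> signed_perm \<sigma> \<epsilon> ` cube \<longleftrightarrow> y \<in> cube" for y by blast
  then show ?thesis by blast
qed

lemma signed_perm_facet:
  assumes "bij \<sigma>" "signs \<epsilon>"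
  shows "signed_perm \<sigma> \<epsilon> ` facet (i, s) = facet (\<sigma> i, if \<epsilon> i = 1 then s else \<not> s)"
proof -
  let ?g = "\<lambda>y. (\<chi> j. \<epsilon> j * y $ \<sigma> j) :: real^'a"
  have in_cube: "?g y \<in> cube \<longleftrightarrow> y \<in> cube" for y
    using signed_perm_image[OF assms, of y cube] signed_perm_cube[OF assms] by simp
  have level: "?g y $ i = (if s then 1/4 else -(1/4)) \<longleftrightarrow>
      y $ \<sigma> i = (if (if \<epsilon> i = 1 then s else \<not> s) then 1/4 else -(1/4))" for y
    using signs_cases[OF assms(2), of i] by (cases s) auto
  show ?thesis
    unfolding set_eq_iff signed_perm_image[OF assms] facet_def mem_Collect_eq fst_conv snd_conv
    using in_cube level by blast
qed

lemma signed_perm_orthogonal: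
  assumes "bij \<sigma>" "signs \<epsilon>"
  shows "orthogonal_transformation (signed_perm \<sigma> \<epsilon>)"
proof -
  have "linear (signed_perm \<sigma> \<epsilon>)"
    by (rule linearI) (simp_all add: signed_perm_def vec_eq_iff algebra_simps)
  moreover have "signed_perm \<sigma> \<epsilon> x \<bullet> signed_perm \<sigma> \<epsilon> y = x \<bullet> y" for x y
  proof -
    have "signed_perm \<sigma> \<epsilon> x \<bullet> signed_perm \<sigma> \<epsilon> y
        = (\<Sum>j\<in>UNIV. signed_perm \<sigma> \<epsilon> x $ \<sigma> j * signed_perm \<sigma> \<epsilon> y $ \<sigma> j)"
      unfolding inner_vec_def inner_real_def
      by (rule sum.reindex_bij_betw[symmetric]) (use assms(1) in simp)
    also have "\<dots> = (\<Sum>j\<in>UNIV. x $ j * y $ j)"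
    proof -
      have "\<epsilon> j * x $ j * (\<epsilon> j * y $ j) = (\<epsilon> j * \<epsilon> j) * (x $ j * y $ j)" for j
        by (simp add: ac_simps)
      then have "signed_perm \<sigma> \<epsilon> x $ \<sigma> j * signed_perm \<sigma> \<epsilon> y $ \<sigma> j = x $ j * y $ j" for j
        by (simp add: signed_perm_at[OF assms(1)] signs_square[OF assms(2)])
      then show ?thesis by (rule sum.cong[OF refl])
    qed
    finally show ?thesis by (simp add: inner_vec_def)
  qed
  ultimately show ?thesis unfolding orthogonal_transformation_def by blast
qed

lemma signed_perm_cube_symmetry: "bij \<sigma> \<Longrightarrow> signs \<epsilon> \<Longrightarrow> cube_symmetry (signed_perm \<sigma> \<epsilon>)"
  using signed_perm_orthogonal signed_perm_cube
  unfolding cube_symmetry_def orthogonal_transformation_isometry by blast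

text \<open>Distinct signed indices give distinct facets: the centre of a facet lies on no other.\<close>

lemma facet_inj: "facet j = facet j' \<Longrightarrow> j = j'"
proof -
  assume eq: "facet j = facet j'"
  obtain i s where j: "j = (i, s)" by force
  define x :: "real^'a" where "x = (\<chi> k. if k = i then (if s then 1/4 else -(1/4)) else 0)"
  have "x \<in> facet j" unfolding j facet_def cube_def x_def by auto
  then have "x \<in> facet j'" using eq by simp
  then show "j = j'" unfolding j facet_def x_def by (cases j') (auto split: if_splits)
qed

subsection \<open>Every symmetry of the cube is a signed permutation\<close>

definition cube_vertex :: "real^'n \<Rightarrow> bool" where
  "cube_vertex x \<longleftrightarrow> (\<forall>i. \<bar>x $ i\<bar> = 1/4)"

lemma interval_gap:
  fixes a b :: real
  assumes "\<bar>a\<bar> \<le> 1/4" "\<bar>b\<bar> \<le> 1/4"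
  shows "(a - b) * (a - b) \<le> 1/4"
    and "(a - b) * (a - b) = 1/4 \<Longrightarrow> b = -a \<and> \<bar>a\<bar> = 1/4"
proof -
  have "\<bar>a - b\<bar> \<le> 1/2" using assms by arith
  then have "0 \<le> (1/2 - (a - b)) * (1/2 + (a - b))" by (intro mult_nonneg_nonneg) arith+
  then show "(a - b) * (a - b) \<le> 1/4" by (simp add: algebra_simps)
  assume "(a - b) * (a - b) = 1/4"
  then have "(a - b - 1/2) * (a - b + 1/2) = 0" by (simp add: algebra_simps)
  then have "a - b = 1/2 \<or> a - b = -1/2" by auto
  then show "b = -a \<and> \<bar>a\<bar> = 1/4" using assms by arith
qed

lemma cube_diameter:
  fixes x y :: "real^'n"
  assumes "x \<in> cube" "y \<in> cube"
  shows "(x - y) \<bullet> (x - y) \<le> CARD('n) / 4"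
    and "(x - y) \<bullet> (x - y) = CARD('n) / 4 \<Longrightarrow> y = -x \<and> cube_vertex x"
proof -
  let ?d = "\<lambda>i. (x $ i - y $ i) * (x $ i - y $ i)"
  have bound: "\<bar>x $ i\<bar> \<le> 1/4" "\<bar>y $ i\<bar> \<le> 1/4" for i using assms cube_iff by blast+
  have sq: "(x - y) \<bullet> (x - y) = (\<Sum>i\<in>UNIV. ?d i)" by (simp add: inner_vec_def)
  have gap: "(\<Sum>i\<in>UNIV. 1/4 - ?d i) = CARD('n) / 4 - (x - y) \<bullet> (x - y)"
    by (simp add: sq sum_subtractf)
  have nonneg: "0 \<le> 1/4 - ?d i" for i using interval_gap(1)[OF bound] by simp
  show "(x - y) \<bullet> (x - y) \<le> CARD('n) / 4"
    using sum_nonneg[of UNIV "\<lambda>i. 1/4 - ?d i"] nonneg gap by simp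
  assume "(x - y) \<bullet> (x - y) = CARD('n) / 4"
  then have "?d i = 1/4" for i
    using sum_nonneg_eq_0_iff[of UNIV "\<lambda>i. 1/4 - ?d i"] nonneg gap by simp
  then have "y $ i = - x $ i \<and> \<bar>x $ i\<bar> = 1/4" for i
    using interval_gap(2)[OF bound(1)[of i] bound(2)[of i]] by blast
  then show "y = -x \<and> cube_vertex x" by (simp add: vec_eq_iff cube_vertex_def)
qed

lemma vertex_antipode:
  fixes x :: "real^'n"
  assumes "cube_vertex x"
  shows "x \<in> cube" "-x \<in> cube" "(x - -x) \<bullet> (x - -x) = CARD('n) / 4"
proof -
  show "x \<in> cube" "-x \<in> cube" using assms unfolding cube_iff cube_vertex_def by auto
  have coord: "(x - -x) $ i * (x - -x) $ i = 1/4" for i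
  proof -
    have "x $ i * x $ i = \<bar>x $ i\<bar> * \<bar>x $ i\<bar>" by simp
    then have "x $ i * x $ i = 1/16" using assms unfolding cube_vertex_def by simp
    then show ?thesis by (simp add: algebra_simps)
  qed
  then show "(x - -x) \<bullet> (x - -x) = CARD('n) / 4"
    unfolding inner_vec_def inner_real_def coord by simp
qed

text \<open>A symmetry maps a pair of antipodal vertices to a pair of points at maximal
  distance, i.e. again to antipodal vertices.\<close>

lemma cube_symmetry_vertex:
  assumes "cube_symmetry h" "cube_vertex x"
  shows "cube_vertex (h x) \<and> h (-x) = - h x"
proof -
  have iso: "dist (h a) (h b) = dist a b" for a b
    using assms(1) unfolding cube_symmetry_def by blast
  have into: "a \<in> cube \<Longrightarrow> h a \<in> cube" for a
    using assms(1) unfolding cube_symmetry_def by blast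
  note antipode = vertex_antipode[OF assms(2)]
  have "(h x - h (-x)) \<bullet> (h x - h (-x)) = CARD('a) / 4"
    using iso[of x "-x"] antipode(3) by (metis dist_norm power2_norm_eq_inner)
  then show ?thesis
    using cube_diameter(2)[OF into[OF antipode(1)] into[OF antipode(2)]] by simp
qed

text \<open>A symmetry commutes with x \<mapsto> -x on vertices; being affine, it fixes the
  centre and is therefore orthogonal.\<close>

lemma cube_symmetry_orthogonal:
  assumes "cube_symmetry h"
  shows "orthogonal_transformation h"
proof -
  have iso: "\<forall>a b. dist (h a) (h b) = dist a b"
    using assms unfolding cube_symmetry_def by blast
  define v :: "real^'a" where "v = (\<chi> i. 1/4)"
  have "cube_vertex v" by (simp add: v_def cube_vertex_def)
  then have antipodal: "h (-v) = - h v" using cube_symmetry_vertex[OF assms] by blast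
  have "linear (\<lambda>x. h x - h 0)"
    by (rule isometry_linear) (use iso in \<open>simp_all add: dist_norm\<close>)
  then have "h (-v) - h 0 = - (h v - h 0)" by (metis linear_neg)
  then have "h 0 = 0" using antipodal by (simp add: algebra_simps vec_eq_iff)
  then show ?thesis using iso orthogonal_transformation_isometry by blast
qed

lemma unit_vector_ternary:
  fixes u :: "real^'n"
  assumes coords: "\<forall>k. u $ k \<in> {-1, 0, 1}" and unit: "u \<bullet> u = 1"
  shows "\<exists>k c. \<bar>c\<bar> = 1 \<and> u = c *\<^sub>R axis k 1"
proof -
  have "u $ k * u $ k = of_bool (u $ k \<noteq> 0)" for k
  proof -
    have "u $ k = -1 \<or> u $ k = 0 \<or> u $ k = 1" using coords by blast
    then show ?thesis by auto
  qed
  then have "real (card {k. u $ k \<noteq> 0}) = 1"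
    using unit by (simp add: inner_vec_def)
  then obtain k where support: "{k. u $ k \<noteq> 0} = {k}" by (metis card_1_singletonE of_nat_eq_1_iff)
  then have "u = u $ k *\<^sub>R axis k 1" by (auto simp: vec_eq_iff axis_def)
  moreover have "\<bar>u $ k\<bar> = 1"
  proof -
    have "u $ k \<noteq> 0" using support by blast
    moreover have "u $ k = -1 \<or> u $ k = 0 \<or> u $ k = 1" using coords by blast
    ultimately show ?thesis by auto
  qed
  ultimately show ?thesis by blast
qed

text \<open>A symmetry maps each basis vector to a signed basis vector: e_i is twice the
  difference of two vertices, so its image has entries in {-1,0,1}.\<close>

lemma cube_symmetry_axis:
  assumes "cube_symmetry h"
  shows "\<exists>k c. \<bar>c\<bar> = 1 \<and> h (axis i 1) = c *\<^sub>R axis k 1"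
proof (rule unit_vector_ternary)
  have orth: "orthogonal_transformation h" by (rule cube_symmetry_orthogonal[OF assms])
  then show "h (axis i 1) \<bullet> h (axis i 1) = 1"
    unfolding orthogonal_transformation_def by (simp add: inner_axis_axis)
  define v :: "real^'a" where "v = (\<chi> k. 1/4)"
  define w :: "real^'a" where "w = (\<chi> k. if k = i then -(1/4) else 1/4)"
  have vertices: "cube_vertex (h v)" "cube_vertex (h w)"
    using cube_symmetry_vertex[OF assms] by (simp_all add: v_def w_def cube_vertex_def)
  have "axis i 1 = 2 *\<^sub>R (v - w)" by (simp add: v_def w_def vec_eq_iff axis_def)
  then have "h (axis i 1) = 2 *\<^sub>R (h v - h w)"
    using orth unfolding orthogonal_transformation_def by (simp add: linear_diff linear_scale)
  then have diff: "h (axis i 1) $ k = 2 * (h v $ k - h w $ k)" for k by simp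
  have "h (axis i 1) $ k = -1 \<or> h (axis i 1) $ k = 0 \<or> h (axis i 1) $ k = 1" for k
  proof -
    have "\<bar>h v $ k\<bar> = 1/4" "\<bar>h w $ k\<bar> = 1/4"
      using vertices unfolding cube_vertex_def by blast+
    then show ?thesis unfolding diff by (auto simp: abs_if split: if_splits)
  qed
  then show "\<forall>k. h (axis i 1) $ k \<in> {-1, 0, 1}" by blast
qed

text \<open>An orthogonal map sending every e_i to \<epsilon> i e_(\<sigma> i) is the signed permutation of
  \<sigma> and \<epsilon>; orthogonality of the images forces \<sigma> to be injective.\<close>

lemma orthogonal_signed_axes:
  fixes h :: "real^'n \<Rightarrow> real^'n"
  assumes orth: "orthogonal_transformation h" and signs: "signs \<epsilon>"
    and axes: "\<And>i. h (axis i 1) = \<epsilon> i *\<^sub>R axis (\<sigma> i) 1"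
  shows "bij \<sigma> \<and> h = signed_perm \<sigma> \<epsilon>"
proof -
  have ip: "h a \<bullet> h b = a \<bullet> b" for a b
    using orth unfolding orthogonal_transformation_def by blast
  have "inj \<sigma>"
  proof (rule injI)
    fix i j assume same: "\<sigma> i = \<sigma> j"
    have nonzero: "\<epsilon> i * \<epsilon> j \<noteq> 0"
      using signs_cases[OF signs, of i] signs_cases[OF signs, of j] by auto
    show "i = j"
    proof (rule ccontr)
      assume "i \<noteq> j"
      then have "h (axis i 1) \<bullet> h (axis j 1) = 0" by (simp add: ip inner_axis_axis)
      moreover have "h (axis i 1) \<bullet> h (axis j 1) = \<epsilon> i * \<epsilon> j"
        by (simp add: axes same inner_axis_axis)
      ultimately show False using nonzero by simp
    qed
  qed
  then have bij: "bij \<sigma>" by (simp add: bij_def finite_UNIV_inj_surj)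
  have "h x $ \<sigma> j = \<epsilon> j * x $ j" for x j
  proof -
    have "axis (\<sigma> j) 1 = \<epsilon> j *\<^sub>R h (axis j 1)"
      by (simp add: axes signs_square[OF signs])
    then have "h x $ \<sigma> j = h x \<bullet> (\<epsilon> j *\<^sub>R h (axis j 1))"
      by (metis inner_axis inner_real_def mult_1_right)
    also have "\<dots> = \<epsilon> j * x $ j" by (simp add: ip inner_axis)
    finally show ?thesis .
  qed
  then have "h = signed_perm \<sigma> \<epsilon>"
    by (simp add: fun_eq_iff vec_eq_bij_iff[OF bij] signed_perm_at[OF bij])
  with bij show ?thesis by blast
qed

lemma cube_symmetry_signed_perm:
  assumes "cube_symmetry h"
  shows "\<exists>\<sigma> \<epsilon>. bij \<sigma> \<and> signs \<epsilon> \<and> h = signed_perm \<sigma> \<epsilon>"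
proof -
  obtain \<sigma> \<epsilon> where axes: "\<And>i. \<bar>\<epsilon> i\<bar> = 1 \<and> h (axis i 1) = \<epsilon> i *\<^sub>R axis (\<sigma> i) 1"
    using cube_symmetry_axis[OF assms] by metis
  then have "signs \<epsilon>" by (simp add: signs_def)
  then show ?thesis
    using orthogonal_signed_axes[OF cube_symmetry_orthogonal[OF assms]] axes by blast
qed

subsection \<open>Facet maps under signed permutations\<close>

lemma signed_perm_tauA:
  assumes "bij \<sigma>" "fst j' = \<sigma> (fst j)"
  shows "signed_perm \<sigma> \<epsilon> (tauA A j x) = tauA (relabel \<sigma> A) j' (signed_perm \<sigma> \<epsilon> x)"
  unfolding vec_eq_bij_iff[OF assms(1)] using assms
  by (simp add: signed_perm_at tauA_def relabel_at bij_is_inj inj_eq)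

lemma tauA_row_determined:
  assumes "tauA A j y = tauA B j y" "k \<noteq> fst j" "y $ k \<noteq> 0"
  shows "A $ fst j $ k = B $ fst j $ k"
proof -
  have "(if A $ fst j $ k = 1 then - y $ k else y $ k) = (if B $ fst j $ k = 1 then - y $ k else y $ k)"
    using arg_cong[OF assms(1), of "\<lambda>v. v $ k"] assms(2) by (simp add: tauA_def)
  then show ?thesis using assms(3) by (auto split: if_splits)
qed

text \<open>If F_A and F_B are equivalent via the signed permutation of \<sigma>, then B is A
  relabelled along \<sigma>: off the diagonal by comparing facet maps at the vertex
  (1/4,...,1/4), on the diagonal because both diagonals vanish.\<close>

lemma equivalent_pairings_relabel:
  fixes A B :: "bit^'n^'n"
  assumes diagA: "\<forall>i. A $ i $ i = 0" and diagB: "\<forall>i. B $ i $ i = 0"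
    and equiv: "fps_equiv (tauA A) (tauA B)"
  shows "\<exists>\<sigma>. bij \<sigma> \<and> B = relabel \<sigma> A"
proof -
  obtain h where sym: "cube_symmetry h"
    and conj: "\<And>j j'. facet j' = h ` facet j \<Longrightarrow> \<forall>x\<in>facet j. tauA A j x = inv h (tauA B j' (h x))"
    using equiv unfolding fps_equiv_def by blast
  obtain \<sigma> \<epsilon> where \<sigma>: "bij \<sigma>" and \<epsilon>: "signs \<epsilon>" and h: "h = signed_perm \<sigma> \<epsilon>"
    using cube_symmetry_signed_perm[OF sym] by blast
  define v :: "real^'n" where "v = (\<chi> k. 1/4)"
  have off_diagonal: "B $ \<sigma> i $ \<sigma> m = A $ i $ m" if "m \<noteq> i" for i m
  proof -
    define j' where "j' = (\<sigma> i, \<epsilon> i = 1)"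
    have facets: "facet j' = h ` facet (i, True)" by (simp add: h j'_def signed_perm_facet[OF \<sigma> \<epsilon>])
    have "v \<in> facet (i, True)" by (simp add: v_def facet_def cube_def)
    then have "h (tauA A (i, True) v) = tauA B j' (h v)"
      using conj[OF facets] signed_perm_bij[OF \<sigma> \<epsilon>] by (simp add: h bij_inv_eq_iff)
    moreover have "h (tauA A (i, True) v) = tauA (relabel \<sigma> A) j' (h v)"
      unfolding h by (rule signed_perm_tauA[OF \<sigma>]) (simp add: j'_def)
    moreover have "h v $ \<sigma> m \<noteq> 0"
      using signs_cases[OF \<epsilon>, of m] by (auto simp: h signed_perm_at[OF \<sigma>] v_def)
    moreover have "\<sigma> m \<noteq> fst j'" using that \<sigma> by (simp add: j'_def bij_is_inj inj_eq)
    ultimately have "relabel \<sigma> A $ fst j' $ \<sigma> m = B $ fst j' $ \<sigma> m"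
      using tauA_row_determined by metis
    then show ?thesis by (simp add: j'_def relabel_at[OF \<sigma>])
  qed
  have "B $ \<sigma> i $ \<sigma> m = relabel \<sigma> A $ \<sigma> i $ \<sigma> m" for i m
    using off_diagonal[of m i] diagA diagB by (cases "m = i") (simp_all add: relabel_at[OF \<sigma>])
  then have "B = relabel \<sigma> A" by (simp add: vec_eq_bij_iff[OF \<sigma>])
  with \<sigma> show ?thesis by blast
qed

text \<open>Conversely, relabelling along p yields an equivalent structure, realised by
  the unsigned coordinate permutation of p.\<close>

lemma relabel_equivalent_pairings:
  assumes "bij p"
  shows "fps_equiv (tauA A) (tauA (relabel p A))"
proof -
  let ?h = "signed_perm p (\<lambda>_. 1)"
  have ones: "signs (\<lambda>_. 1)" by (simp add: signs_def)
  have "tauA A j x = inv ?h (tauA (relabel p A) j' (?h x))" if facets: "facet j' = ?h ` facet j" for j j' x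
  proof -
    obtain i s where j: "j = (i, s)" by force
    have "facet j' = facet (p i, s)" using facets by (simp add: j signed_perm_facet[OF assms ones])
    then have "j' = (p i, s)" by (rule facet_inj)
    then have "fst j' = p (fst j)" by (simp add: j)
    then have "?h (tauA A j x) = tauA (relabel p A) j' (?h x)" by (rule signed_perm_tauA[OF assms])
    then show ?thesis using signed_perm_bij[OF assms ones] by (simp add: bij_inv_eq_iff)
  qed
  then show ?thesis
    using signed_perm_cube_symmetry[OF assms ones] unfolding fps_equiv_def by blast
qed

theorem mainTheorem9:
  fixes A B :: "bit^'n^'n"
  assumes "\<forall>i. A $ i $ i = 0" and "\<forall>i. B $ i $ i = 0"
  shows "fps_equiv (tauA A) (tauA B) \<longleftrightarrow>
         (\<exists>P. perm_matrix P \<and> B = matrix_inv P ** A ** P)"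
proof
  assume "fps_equiv (tauA A) (tauA B)"
  then obtain \<sigma> where "bij \<sigma>" "B = relabel \<sigma> A"
    using equivalent_pairings_relabel assms by blast
  then show "\<exists>P. perm_matrix P \<and> B = matrix_inv P ** A ** P"
    using perm_matrix_iff perm_mat_conj by metis
next
  assume "\<exists>P. perm_matrix P \<and> B = matrix_inv P ** A ** P"
  then obtain p where "bij p" "B = relabel p A"
    using perm_matrix_iff perm_mat_conj by metis
  then show "fps_equiv (tauA A) (tauA B)"
    using relabel_equivalent_pairings by blast
qed

end
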